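(* Let $H=\ell^2$ with standard unit vectors $e_k$, and define $f:H\to\mathbb{R}\cup\{+\infty\}$ by $f(\frac1ke_k)=\frac{1}{k^3}$ for $k=1,2,\dots$, $f(0)=0$, and $f(x)=+\infty$ otherwise. Then $f$ is proper and lower semicontinuous, $\bar x=0$ is a global minimizer of $f$ with $0\in\partial_pf(0)$, and $f''_-(0,0,h)=+\infty$ for every $h\in S_H$; nevertheless $0$ is not a strict local minimizer of order two for $f$.
   Context: $S_H$ is the unit sphere of $H$; $B(x,\delta)$ the open ball. $\bar x$ is a strict local minimizer of order two for $f$ if there exist $\beta,\delta>0$ with $f(x)\ge f(\bar x)+\frac{\beta}{2}\|x-\bar x\|^2$ for all $x\in B(\bar x,\delta)$. Proximal subdifferential: $\zeta\in\partial_p f(x)$ iff there exist $\sigma,\delta>0$ with $f(y)\ge f(x)+\langle\zeta,y-x\rangle-\frac{\sigma}{2}\|y-x\|^2$ whenever $\|y-x\|<\delta$. $f''_-(\bar x,p,h):=\liminf_{h'\to h,\,t\downarrow0}\frac{f(\bar x+th')-f(\bar x)-t\langle p,h'\rangle}{\frac12t^2}$. *)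

theory Defs
  imports "HOL-Analysis.Analysis"
begin

text \<open>Sequences are functions nat to real; the coordinate 0 is forced to be 0,
so the type is exactly the space of square-summable sequences (x_1, x_2, ...).\<close>

typedef l2 = "{x :: nat \<Rightarrow> real. x 0 = 0 \<and> summable (\<lambda>n. (x n)\<^sup>2)}"
  by (rule exI[of _ "\<lambda>_. 0"]) simp

setup_lifting type_definition_l2

lemma l2_sq_add:
  fixes x y :: "nat \<Rightarrow> real"
  assumes "summable (\<lambda>n. (x n)\<^sup>2)" "summable (\<lambda>n. (y n)\<^sup>2)"
  shows "summable (\<lambda>n. (x n + y n)\<^sup>2)"
proof (rule summable_comparison_test[OF _ summable_add[OF summable_mult[OF assms(1), of 2] summable_mult[OF assms(2), of 2]]])
  show "\<exists>N. \<forall>n\<ge>N. norm ((x n + y n)\<^sup>2) \<le> 2 * (x n)\<^sup>2 + 2 * (y n)\<^sup>2"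
  proof (intro exI allI impI)
    fix n
    have "0 \<le> (x n - y n)\<^sup>2" by simp
    then show "norm ((x n + y n)\<^sup>2) \<le> 2 * (x n)\<^sup>2 + 2 * (y n)\<^sup>2"
      unfolding real_norm_def abs_power2 by (simp add: power2_eq_square algebra_simps)
  qed
qed

lemma l2_prod_summable:
  fixes x y :: "nat \<Rightarrow> real"
  assumes "summable (\<lambda>n. (x n)\<^sup>2)" "summable (\<lambda>n. (y n)\<^sup>2)"
  shows "summable (\<lambda>n. x n * y n)"
proof (rule summable_comparison_test[OF _ summable_add[OF assms]])
  show "\<exists>N. \<forall>n\<ge>N. norm (x n * y n) \<le> (x n)\<^sup>2 + (y n)\<^sup>2"
  proof (intro exI allI impI)
    fix n
    have "0 \<le> (\<bar>x n\<bar> - \<bar>y n\<bar>)\<^sup>2" by simp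
    then have a: "2 * (\<bar>x n\<bar> * \<bar>y n\<bar>) \<le> (x n)\<^sup>2 + (y n)\<^sup>2"
      by (simp add: power2_eq_square algebra_simps)
    have b: "0 \<le> \<bar>x n\<bar> * \<bar>y n\<bar>" by simp
    show "norm (x n * y n) \<le> (x n)\<^sup>2 + (y n)\<^sup>2"
      using a b unfolding real_norm_def abs_mult by linarith
  qed
qed

instantiation l2 :: real_vector
begin
lift_definition zero_l2 :: l2 is "\<lambda>_. 0" by simp
lift_definition plus_l2 :: "l2 \<Rightarrow> l2 \<Rightarrow> l2" is "\<lambda>x y n. x n + y n"
  by (auto intro: l2_sq_add)
lift_definition uminus_l2 :: "l2 \<Rightarrow> l2" is "\<lambda>x n. - x n" by simp
lift_definition minus_l2 :: "l2 \<Rightarrow> l2 \<Rightarrow> l2" is "\<lambda>x y n. x n - y n"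
proof -
  fix x y :: "nat \<Rightarrow> real"
  assume "x 0 = 0 \<and> summable (\<lambda>n. (x n)\<^sup>2)" "y 0 = 0 \<and> summable (\<lambda>n. (y n)\<^sup>2)"
  then have "summable (\<lambda>n. (x n + - y n)\<^sup>2)" by (intro l2_sq_add) auto
  then show "x 0 - y 0 = 0 \<and> summable (\<lambda>n. (x n - y n)\<^sup>2)"
    using \<open>x 0 = 0 \<and> _\<close> \<open>y 0 = 0 \<and> _\<close> by simp
qed
lift_definition scaleR_l2 :: "real \<Rightarrow> l2 \<Rightarrow> l2" is "\<lambda>c x n. c * x n"
  by (simp add: power_mult_distrib summable_mult)
instance
  by standard (transfer; auto simp: algebra_simps)+
end

instantiation l2 :: real_inner
begin
lift_definition inner_l2 :: "l2 \<Rightarrow> l2 \<Rightarrow> real" is "\<lambda>x y. \<Sum>n. x n * y n" .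
definition norm_l2 :: "l2 \<Rightarrow> real" where "norm_l2 x = sqrt (inner x x)"
definition sgn_l2 :: "l2 \<Rightarrow> l2" where "sgn_l2 x = x /\<^sub>R norm x"
definition dist_l2 :: "l2 \<Rightarrow> l2 \<Rightarrow> real" where "dist_l2 x y = norm (x - y)"
definition uniformity_l2 :: "(l2 \<times> l2) filter"
  where "uniformity_l2 = (INF e\<in>{0<..}. principal {(x, y). dist x y < e})"
definition open_l2 :: "l2 set \<Rightarrow> bool"
  where "open_l2 U = (\<forall>x\<in>U. \<forall>\<^sub>F (x', y) in uniformity. x' = x \<longrightarrow> y \<in> U)"
instance
proof
  fix x y z :: l2 and r :: real
  show "inner x y = inner y x" by transfer (simp add: mult.commute)
  show "inner (x + y) z = inner x z + inner y z"
    by transfer (auto simp: distrib_right intro!: suminf_add[symmetric] l2_prod_summable)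
  show "inner (r *\<^sub>R x) y = r * inner x y"
    by transfer (auto simp: mult.assoc intro!: suminf_mult l2_prod_summable)
  show "0 \<le> inner x x"
    by transfer (auto intro!: suminf_nonneg simp: power2_eq_square)
  show "(inner x x = 0) = (x = 0)"
    by transfer (auto simp: power2_eq_square[symmetric] suminf_eq_zero_iff)
qed (auto simp: norm_l2_def sgn_l2_def dist_l2_def uniformity_l2_def open_l2_def)
end

lift_definition coord :: "l2 \<Rightarrow> nat \<Rightarrow> real" is "\<lambda>x. x" .

lift_definition unit_vec :: "nat \<Rightarrow> l2" is "\<lambda>k n. if k \<noteq> 0 \<and> n = k then 1 else 0"
proof -
  fix k :: nat
  have "summable (\<lambda>n. (if k \<noteq> 0 \<and> n = k then 1 else 0 :: real)\<^sup>2)"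
    by (rule summable_finite[of "{k}"]) auto
  then show "(if k \<noteq> 0 \<and> 0 = k then 1 else 0 :: real) = 0 \<and> summable (\<lambda>n. (if k \<noteq> 0 \<and> n = k then 1 else 0 :: real)\<^sup>2)"
    by auto
qed

definition proper_fun :: "('a \<Rightarrow> ereal) \<Rightarrow> bool" where
  "proper_fun f \<longleftrightarrow> (\<forall>x. f x \<noteq> -\<infinity>) \<and> (\<exists>x. f x \<noteq> \<infinity>)"

definition lsc :: "('a::topological_space \<Rightarrow> ereal) \<Rightarrow> bool" where
  "lsc f \<longleftrightarrow> (\<forall>x. f x \<le> Liminf (at x) f)"

definition global_minimizer :: "('a \<Rightarrow> ereal) \<Rightarrow> 'a \<Rightarrow> bool" where
  "global_minimizer f xb \<longleftrightarrow> (\<forall>x. f xb \<le> f x)"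

definition prox_subdiff :: "('a::real_inner \<Rightarrow> ereal) \<Rightarrow> 'a \<Rightarrow> 'a set" where
  "prox_subdiff f x = {\<zeta>. \<bar>f x\<bar> \<noteq> \<infinity> \<and> (\<exists>\<sigma>>0. \<exists>\<delta>>0. \<forall>y. norm (y - x) < \<delta> \<longrightarrow>
      f y \<ge> f x + ereal (inner \<zeta> (y - x) - \<sigma> / 2 * (norm (y - x))\<^sup>2))}"

definition second_subderiv :: "('a::real_inner \<Rightarrow> ereal) \<Rightarrow> 'a \<Rightarrow> 'a \<Rightarrow> 'a \<Rightarrow> ereal" where
  "second_subderiv f xb p h = Liminf (nhds h \<times>\<^sub>F at_right 0)
     (\<lambda>(h', t). (f (xb + t *\<^sub>R h') - f xb - ereal (t * inner p h')) / ereal (t\<^sup>2 / 2))"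

definition strict_local_min_order2 :: "('a::real_normed_vector \<Rightarrow> ereal) \<Rightarrow> 'a \<Rightarrow> bool" where
  "strict_local_min_order2 f xb \<longleftrightarrow> (\<exists>\<beta>>0. \<exists>\<delta>>0. \<forall>x\<in>ball xb \<delta>.
      f x \<ge> f xb + ereal (\<beta> / 2 * (norm (x - xb))\<^sup>2))"

definition f_ex :: "l2 \<Rightarrow> ereal" where
  "f_ex x = (if \<exists>k\<ge>1. x = (1 / real k) *\<^sub>R unit_vec k
             then ereal (1 / real (THE k. k \<ge> 1 \<and> x = (1 / real k) *\<^sub>R unit_vec k) ^ 3)
             else if x = 0 then 0 else \<infinity>)"

end

theory Submission
  imports Defs
begin

text \<open>The effective domain of f is {0} together with the points e_k/k, which converge to 0;
hence every nonzero point has a punctured neighbourhood on which f = \<infinity>, and f is lower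
semicontinuous. Since f \<ge> 0 = f 0, the origin is a global minimizer and 0 is a proximal
subgradient there. For a direction h \<noteq> 0, a point t h' with h' close to h and t > 0 lies in the
domain only if h' is a multiple of some e_k with k small (because the coordinates of h tend to 0)
and t \<approx> 1/(k \<parallel>h\<parallel>) is then bounded below; so for small t the difference quotients are \<infinity>.
Quadratic growth nevertheless fails: f (e_k/k) = 1/k^3 is o(\<parallel>e_k/k\<parallel>^2) = o(1/k^2).\<close>

lemma Liminf_eq_infinity:
  fixes f :: "'a \<Rightarrow> ereal"
  assumes "eventually (\<lambda>x. f x = \<infinity>) F"
  shows "Liminf F f = \<infinity>"
proof -
  have "\<infinity> \<le> Liminf F f"
    unfolding le_Liminf_iff using assms by (auto elim!: eventually_mono)
  then show ?thesis
    by (simp add: top_unique)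
qed

lemma zero_in_prox_subdiff_if_global_minimizer:
  fixes f :: "'a::real_inner \<Rightarrow> ereal"
  assumes "global_minimizer f x" and "\<bar>f x\<bar> \<noteq> \<infinity>"
  shows "0 \<in> prox_subdiff f x"
proof -
  have "f x + ereal (inner 0 (y - x) - 1 / 2 * (norm (y - x))\<^sup>2) \<le> f y" for y
  proof -
    have "f x + ereal (inner 0 (y - x) - 1 / 2 * (norm (y - x))\<^sup>2) \<le> f x + 0"
      by (intro add_left_mono) simp
    also have "\<dots> \<le> f y"
      using assms(1) by (simp add: global_minimizer_def)
    finally show ?thesis .
  qed
  then show ?thesis
    unfolding prox_subdiff_def using assms(2) by (auto intro!: exI[of _ 1])
qed

lemma coord_scaleR [simp]: "coord (a *\<^sub>R x) n = a * coord x n"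
  by transfer simp

lemma coord_diff [simp]: "coord (x - y) n = coord x n - coord y n"
  by transfer simp

lemma coord_unit_vec [simp]: "coord (unit_vec k) n = (if k \<noteq> 0 \<and> n = k then 1 else 0)"
  by transfer simp

lemma inner_unit_vec: "k \<ge> 1 \<Longrightarrow> inner x (unit_vec k) = coord x k"
proof transfer
  fix k :: nat and x :: "nat \<Rightarrow> real"
  assume "1 \<le> k"
  then have "(\<lambda>n. x n * (if k \<noteq> 0 \<and> n = k then 1 else 0)) = (\<lambda>n. if n = k then x n else 0)"
    by auto
  then show "(\<Sum>n. x n * (if k \<noteq> 0 \<and> n = k then 1 else 0)) = x k"
    using sums_single[of k x] by (simp add: sums_iff)
qed

lemma norm_unit_vec: "k \<ge> 1 \<Longrightarrow> norm (unit_vec k) = 1"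
  by (simp add: norm_l2_def inner_unit_vec)

lemma abs_coord_le_norm: "k \<ge> 1 \<Longrightarrow> \<bar>coord x k\<bar> \<le> norm x"
  using Cauchy_Schwarz_ineq2[of x "unit_vec k"] by (simp add: inner_unit_vec norm_unit_vec)

lemma coord_LIMSEQ_zero: "(\<lambda>n. coord x n) \<longlonglongrightarrow> 0"
proof -
  have "summable (\<lambda>n. (coord x n)\<^sup>2)"
    by transfer simp
  then have "(\<lambda>n. sqrt ((coord x n)\<^sup>2)) \<longlonglongrightarrow> sqrt 0"
    by (intro tendsto_real_sqrt summable_LIMSEQ_zero)
  then show ?thesis
    by (simp add: tendsto_rabs_zero_iff)
qed

definition spike :: "nat \<Rightarrow> l2" where
  "spike k = (1 / real k) *\<^sub>R unit_vec k"

lemma coord_spike: "coord (spike k) n = (if k \<noteq> 0 \<and> n = k then 1 / real k else 0)"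
  by (simp add: spike_def)

lemma norm_spike: "k \<ge> 1 \<Longrightarrow> norm (spike k) = 1 / real k"
  by (simp add: spike_def norm_unit_vec)

lemma inj_on_spike: "inj_on spike {1..}"
proof (rule inj_onI)
  fix j k :: nat
  assume "j \<in> {1..}" "k \<in> {1..}" "spike j = spike k"
  then have "coord (spike j) k = coord (spike k) k" by simp
  with \<open>k \<in> {1..}\<close> show "j = k" by (auto simp: coord_spike split: if_splits)
qed

lemma spike_LIMSEQ_zero: "(\<lambda>n. spike (Suc n)) \<longlonglongrightarrow> 0"
proof (rule tendsto_norm_zero_cancel)
  have "(\<lambda>n. norm (spike (Suc n))) = (\<lambda>n. inverse (real (Suc n)))"
    by (simp add: norm_spike divide_inverse del: of_nat_Suc)
  then show "(\<lambda>n. norm (spike (Suc n))) \<longlonglongrightarrow> 0"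
    using LIMSEQ_inverse_real_of_nat by simp
qed

lemma f_ex_spike: "k \<ge> 1 \<Longrightarrow> f_ex (spike k) = ereal (1 / real k ^ 3)"
proof -
  assume k: "k \<ge> 1"
  have "(THE j. j \<ge> 1 \<and> spike k = (1 / real j) *\<^sub>R unit_vec j) = k"
    using k inj_on_spike by (intro the_equality) (auto simp: spike_def[symmetric] inj_on_def)
  then show ?thesis
    using k unfolding f_ex_def spike_def by auto
qed

lemma f_ex_zero: "f_ex 0 = 0"
  using norm_spike unfolding f_ex_def spike_def[symmetric] by (fastforce simp: zero_ereal_def)

lemma f_ex_nonneg: "f_ex x \<ge> 0"
  unfolding f_ex_def by auto

definition dom_ex :: "l2 set" where
  "dom_ex = insert 0 (spike ` {1..})"

lemma f_ex_outside_dom_ex: "x \<notin> dom_ex \<Longrightarrow> f_ex x = \<infinity>"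
  unfolding f_ex_def dom_ex_def spike_def by auto

lemma islimpt_dom_ex_imp_zero:
  assumes "x islimpt dom_ex"
  shows "x = 0"
proof -
  have "range Suc = {1::nat..}"
    by (auto simp: image_iff dest: Suc_le_D)
  then have "spike ` {1..} = range (\<lambda>n. spike (Suc n))"
    by (metis image_image)
  then have "x islimpt range (\<lambda>n. spike (Suc n))"
    using assms by (simp add: dom_ex_def islimpt_insert)
  then show ?thesis
    by (rule sequence_unique_limpt[OF spike_LIMSEQ_zero])
qed

lemma eventually_f_ex_infinity_at: "x \<noteq> 0 \<Longrightarrow> eventually (\<lambda>y. f_ex y = \<infinity>) (at x)"
proof -
  assume "x \<noteq> 0"
  then have "eventually (\<lambda>y. y \<notin> dom_ex) (at x)"
    using islimpt_dom_ex_imp_zero islimpt_iff_eventually by blast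
  then show ?thesis
    by (rule eventually_mono) (rule f_ex_outside_dom_ex)
qed

lemma lsc_f_ex: "lsc f_ex"
  unfolding lsc_def
proof
  fix x
  show "f_ex x \<le> Liminf (at x) f_ex"
  proof (cases "x = 0")
    case True
    then show ?thesis
      using Liminf_bounded[OF always_eventually, of 0 f_ex] f_ex_nonneg by (simp add: f_ex_zero)
  next
    case False
    then show ?thesis
      by (simp add: Liminf_eq_infinity eventually_f_ex_infinity_at)
  qed
qed

lemma scaled_spike_near:
  assumes t: "t > 0" and k: "k \<ge> 1" and scaled: "t *\<^sub>R h' = spike k"
    and near: "dist h' h < norm h / 4"
  shows "norm h / 2 < coord h k" and "4 / (5 * norm h) < t * real k"
proof -
  define c where "c = 1 / (t * real k)"
  have "c > 0"
    using t k by (simp add: c_def)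
  have "h' = (1 / t) *\<^sub>R (t *\<^sub>R h')"
    using t by simp
  also have "\<dots> = c *\<^sub>R unit_vec k"
    by (simp add: scaled spike_def c_def)
  finally have h': "h' = c *\<^sub>R unit_vec k" .
  have norm_h': "norm h' = c" and coord_h': "coord h' k = c"
    using \<open>c > 0\<close> k by (simp_all add: h' norm_unit_vec)
  have "\<bar>c - coord h k\<bar> < norm h / 4"
    using abs_coord_le_norm[OF k, of "h' - h"] near by (simp add: coord_h' dist_norm)
  moreover have "\<bar>c - norm h\<bar> < norm h / 4"
    using norm_triangle_ineq3[of h' h] near by (simp add: norm_h' dist_norm)
  ultimately show "norm h / 2 < coord h k"
    by linarith
  have "4 * c < 5 * norm h" and "norm h > 0"
    using \<open>\<bar>c - norm h\<bar> < norm h / 4\<close> \<open>c > 0\<close> by linarith+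
  then have "4 / (5 * norm h) < 1 / c"
    using \<open>c > 0\<close> by (simp add: divide_simps)
  also have "\<dots> = t * real k"
    using t k by (simp add: c_def)
  finally show "4 / (5 * norm h) < t * real k" .
qed

lemma eventually_f_ex_scaled_infinity:
  assumes "h \<noteq> 0"
  shows "\<forall>\<^sub>F (h', t) in nhds h \<times>\<^sub>F at_right 0. 0 < t \<and> f_ex (t *\<^sub>R h') = \<infinity>"
proof -
  obtain N where N: "\<And>k. k \<ge> N \<Longrightarrow> \<bar>coord h k\<bar> < norm h / 2"
    using LIMSEQ_D[OF coord_LIMSEQ_zero, of "norm h / 2" h] assms by auto
  define T where "T = 4 / (5 * norm h * real (Suc N))"
  have "T > 0"
    using assms by (simp add: T_def)
  have near: "\<forall>\<^sub>F h' in nhds h. dist h' h < norm h / 4"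
    unfolding eventually_nhds_metric using assms by (intro exI[of _ "norm h / 4"]) auto
  have small: "\<forall>\<^sub>F t in at_right 0. t \<in> {0<..<T}"
    using \<open>T > 0\<close> by (intro eventually_at_right_real)
  have "t *\<^sub>R h' \<notin> dom_ex" if h': "dist h' h < norm h / 4" and t: "t \<in> {0<..<T}" for h' t
  proof
    assume "t *\<^sub>R h' \<in> dom_ex"
    moreover have "h' \<noteq> 0"
      using h' assms by auto
    ultimately obtain k where k: "k \<ge> 1" and scaled: "t *\<^sub>R h' = spike k"
      using t by (auto simp: dom_ex_def)
    have "k < N"
      using scaled_spike_near(1)[OF _ k scaled h'] N[of k] t by fastforce
    then have "t * real k < T * real (Suc N)"
      using t by (intro mult_strict_mono) auto
    also have "\<dots> = 4 / (5 * norm h)"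
      by (simp add: T_def del: of_nat_Suc)
    finally show False
      using scaled_spike_near(2)[OF _ k scaled h'] t by simp
  qed
  then show ?thesis
    unfolding eventually_prod_filter using near small
    by (intro exI conjI) (auto simp: f_ex_outside_dom_ex)
qed

lemma second_subderiv_f_ex:
  assumes "h \<noteq> 0"
  shows "second_subderiv f_ex 0 0 h = \<infinity>"
  unfolding second_subderiv_def
  by (rule Liminf_eq_infinity, rule eventually_mono[OF eventually_f_ex_scaled_infinity[OF assms]])
     (auto simp: f_ex_zero)

lemma not_strict_local_min_order2_f_ex: "\<not> strict_local_min_order2 f_ex 0"
proof
  assume "strict_local_min_order2 f_ex 0"
  then obtain \<beta> \<delta> where "\<beta> > 0" "\<delta> > 0"
    and growth: "\<And>x. x \<in> ball 0 \<delta> \<Longrightarrow> f_ex 0 + ereal (\<beta> / 2 * (norm (x - 0))\<^sup>2) \<le> f_ex x"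
    unfolding strict_local_min_order2_def by blast
  obtain k :: nat where k: "max (1 / \<delta>) (2 / \<beta>) < real k"
    using reals_Archimedean2 by blast
  then have "1 / \<delta> < real k" and "2 / \<beta> < real k"
    by auto
  moreover have "0 < 1 / \<delta>"
    using \<open>\<delta> > 0\<close> by simp
  ultimately have "k \<ge> 1"
    by linarith
  then have "spike k \<in> ball 0 \<delta>"
    using \<open>1 / \<delta> < real k\<close> \<open>\<delta> > 0\<close> by (simp add: norm_spike field_simps)
  from growth[OF this] have "\<beta> / 2 * (1 / real k)\<^sup>2 \<le> 1 / real k ^ 3"
    using \<open>k \<ge> 1\<close> by (simp add: f_ex_spike norm_spike f_ex_zero)
  then have "\<beta> * real k \<le> 2"
    using \<open>k \<ge> 1\<close> by (simp add: field_simps power2_eq_square power3_eq_cube)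
  with \<open>2 / \<beta> < real k\<close> \<open>\<beta> > 0\<close> show False
    by (simp add: field_simps)
qed

theorem mainTheorem13:
  shows "proper_fun f_ex \<and> lsc f_ex \<and> global_minimizer f_ex 0 \<and> 0 \<in> prox_subdiff f_ex 0
    \<and> (\<forall>h. norm h = 1 \<longrightarrow> second_subderiv f_ex 0 0 h = \<infinity>)
    \<and> \<not> strict_local_min_order2 f_ex 0"
proof -
  have "f_ex x \<noteq> -\<infinity>" for x
    using f_ex_nonneg[of x] by auto
  then have proper: "proper_fun f_ex"
    unfolding proper_fun_def by (auto simp: f_ex_zero intro!: exI[of _ 0])
  have minimizer: "global_minimizer f_ex 0"
    unfolding global_minimizer_def using f_ex_nonneg by (simp add: f_ex_zero)
  then have "0 \<in> prox_subdiff f_ex 0"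
    by (rule zero_in_prox_subdiff_if_global_minimizer) (simp add: f_ex_zero)
  moreover have "second_subderiv f_ex 0 0 h = \<infinity>" if "norm h = 1" for h
    using that by (intro second_subderiv_f_ex) auto
  ultimately show ?thesis
    using proper lsc_f_ex minimizer not_strict_local_min_order2_f_ex by blast
qed

end
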